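(* Let $P$ be a recursively labelled forest poset on $\{1,2,\ldots,n\}$, and for each $i$ let $h_i:=|P_{\geq i}|$ and $\min(P_{\geq i})$ be the smallest integer in $P_{\geq i}$. Then, in $\mathbb{Q}(x_1,x_2,\ldots)$, $$L(P):=\sum_{w \in \mathcal{L}(P)} \mathrm{wt}(w) = \frac{[n]!}{\prod_{i=1}^n F^{\min(P_{\geq i})-1}[h_i]}.$$
   Context: Work in the field $\mathbb{Q}(x_1,x_2,\ldots)$ of rational functions in countably many indeterminates, and let $F$ be the field endomorphism ("Frobenius map") with $F(x_i)=x_{i+1}$ for all $i$. Define $[n]:=x_1+x_2+\cdots+x_n$ (so $F^{j}[n]=x_{j+1}+\cdots+x_{j+n}$), $[0]!:=1$ and $[n]!:=[n]\cdot F([n-1]!)=\prod_{j=0}^{n-1}F^j[n-j]$. For a $k$-element set $S=\{i_1>i_2>\cdots>i_k\}$ of positive integers define $\mathrm{wt}(S):=\frac{\prod_{j=1}^k F^{i_j-1}[j]}{[k]!}$ (with $\mathrm{wt}(\emptyset)=1$). For a permutation $w=(w_1,\ldots,w_n)$ of $\{1,\ldots,n\}$ in one-line notation define $\mathrm{wt}(w)$ recursively: the empty permutation ($n=0$) has weight $1$; otherwise let $k:=w_1-1$, let $S(w):=\{i: w_i\le k\}$, let $a$ be the permutation of $\{1,\ldots,k\}$ obtained by listing the values $w_i\le k$ in order of increasing $i$, and let $\hat b$ be the permutation of $\{1,\ldots,n-k-1\}$ obtained by listing the values $w_i-k-1$ for those $i$ with $w_i>k+1$, in order of increasing $i$; then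 $\mathrm{wt}(w):=\mathrm{wt}(S(w))\cdot \mathrm{wt}(a)\cdot F^{k+1}(\mathrm{wt}(\hat b))$. A forest poset on $\{1,\ldots,n\}$ is a partial order $<_P$ in which every element covers at most one other element; $P_{\geq i}:=\{j: j\geq_P i\}$ is the subtree rooted at $i$. $P$ is recursively labelled if each $P_{\geq i}$ is an interval of consecutive integers. $\mathcal{L}(P)$ is the set of linear extensions of $P$: permutations $w$ such that $i<_P j$ implies $i$ appears before $j$ in the word $w_1w_2\cdots w_n$. *)

theory Defs
  imports Main
begin

text \<open>Generic model of Q(x_1,x_2,...): a field of characteristic 0 together with
a sequence x :: nat => 'a (x 0 is unused). The Frobenius F acts by substitution
x_i |-> x_(i+1); hence F^j applied to an expression e(x) is e(\<lambda>i. x (i+j)).\<close>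

text \<open>brk x j m = F^j [m] = x_(j+1) + ... + x_(j+m)\<close>
definition brk :: "(nat \<Rightarrow> 'a::field) \<Rightarrow> nat \<Rightarrow> nat \<Rightarrow> 'a" where
  "brk x j m = (\<Sum>i\<in>{j<..j+m}. x i)"

text \<open>qfact x n = [n]! = prod_{j<n} F^j [n-j]\<close>
definition qfact :: "(nat \<Rightarrow> 'a::field) \<Rightarrow> nat \<Rightarrow> 'a" where
  "qfact x n = (\<Prod>j<n. brk x j (n - j))"

definition wt_set :: "(nat \<Rightarrow> 'a::field) \<Rightarrow> nat set \<Rightarrow> 'a" where
  "wt_set x S = (let L = rev (sorted_list_of_set S); k = card S in
     (\<Prod>j<k. brk x (L ! j - 1) (j + 1)) / qfact x k)"

text \<open>Weight of a permutation in one-line notation w = v # rest, with k = v - 1: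
S(w) = positions i (1-based) with w_i \<le> k, i.e. w_i < v; a = values < v in order;
hat b = values > v shifted down by v; the factor F^(k+1) = F^v acts by shifting x by v.\<close>
fun wt_perm :: "(nat \<Rightarrow> 'a::field) \<Rightarrow> nat list \<Rightarrow> 'a" where
  "wt_perm x [] = 1"
| "wt_perm x (v # rest) =
     wt_set x {i + 2 | i. i < length rest \<and> rest ! i < v}
     * wt_perm x (filter (\<lambda>u. u < v) rest)
     * wt_perm (\<lambda>i. x (i + v)) (map (\<lambda>u. u - v) (filter (\<lambda>u. v < u) rest))"

text \<open>Posets on {1..n} as relations r (pairs (i,j) meaning i \<le>_P j).\<close>
definition covers :: "(nat \<times> nat) set \<Rightarrow> nat \<Rightarrow> nat \<Rightarrow> bool" where
  "covers r j i \<longleftrightarrow> (i, j) \<in> r \<and> i \<noteq> j \<and>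
     \<not> (\<exists>k. k \<noteq> i \<and> k \<noteq> j \<and> (i, k) \<in> r \<and> (k, j) \<in> r)"

definition forest_poset :: "nat \<Rightarrow> (nat \<times> nat) set \<Rightarrow> bool" where
  "forest_poset n r \<longleftrightarrow> partial_order_on {1..n} r \<and>
     (\<forall>j i i'. covers r j i \<and> covers r j i' \<longrightarrow> i = i')"

definition up_set :: "(nat \<times> nat) set \<Rightarrow> nat \<Rightarrow> nat set" where
  "up_set r i = {j. (i, j) \<in> r}"

definition recursively_labelled :: "nat \<Rightarrow> (nat \<times> nat) set \<Rightarrow> bool" where
  "recursively_labelled n r \<longleftrightarrow> (\<forall>i\<in>{1..n}. \<exists>a b. up_set r i = {a..b})"

definition lin_ext :: "nat \<Rightarrow> (nat \<times> nat) set \<Rightarrow> nat list set" where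
  "lin_ext n r = {w. distinct w \<and> set w = {1..n} \<and>
     (\<forall>p q. p < length w \<and> q < length w \<and> (w ! p, w ! q) \<in> r \<and> w ! p \<noteq> w ! q \<longrightarrow> p < q)}"

end

theory Submission
  imports Defs
begin

text \<open>The first letter \<open>v\<close> of a linear extension is a root of \<open>P\<close>. Since \<open>P\<close> is recursively
labelled, its trees occupy intervals, so for \<open>v = k + 1\<close> the elements \<open>{1..k}\<close> and \<open>{k+2..n}\<close>
form two recursively labelled subforests, and no element of one is comparable with an element of
the other. Hence \<open>w \<mapsto> (S(w), a, b)\<close> is a bijection from the linear extensions starting with
\<open>v\<close> onto (\<open>k\<close>-subsets of \<open>{2..n}\<close>) \<open>\<times> L(P_below_v) \<times> L(P_above_v)\<close>, under which the weight
factorises. A Pascal-type recursion gives \<open>sum_{|S| = k} wt(S) = prod_{j<k} F^(j+1)[n-1-j] / [k]!\<close>,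
so by induction on \<open>n\<close> the words starting with \<open>v\<close> contribute \<open>F[n-1]!\<close> times the hook factor
of \<open>v\<close>, divided by the product of all hook factors. The root trees partition \<open>{1..n}\<close>, so the
hook factors of the roots add up to \<open>[n]\<close>, and \<open>[n] F[n-1]! = [n]!\<close>.\<close>

section \<open>Brackets, factorials and subset sums\<close>

lemma brk_eq_sum_lessThan: "brk x j m = (\<Sum>i<m. x (Suc (j + i)))"
proof (induction m)
  case (Suc m)
  have "{j<..j + Suc m} = insert (Suc (j + m)) {j<..j + m}" by auto
  with Suc show ?case by (simp add: brk_def)
qed (simp add: brk_def)

lemma brk_shift: "brk (\<lambda>i. x (i + v)) j m = brk x (j + v) m"
  by (simp add: brk_eq_sum_lessThan algebra_simps)

lemma brk_shift_Suc [simp]: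
  "brk (\<lambda>i. x (Suc i)) j m = brk x (Suc j) m"
  "brk (\<lambda>i. x (Suc (i + k))) j m = brk x (Suc (j + k)) m"
  by (simp_all add: brk_eq_sum_lessThan algebra_simps)

lemma brk_0 [simp]: "brk x j 0 = 0"
  by (simp add: brk_def)

lemma brk_add: "brk x a k + brk x (a + k) l = brk x a (k + l)"
  by (induction l) (simp_all add: brk_eq_sum_lessThan algebra_simps)

lemma brk_atLeastAtMost: "1 \<le> a \<Longrightarrow> brk x (a - 1) (Suc b - a) = (\<Sum>i\<in>{a..b}. x i)"
proof -
  assume "1 \<le> a"
  then have "{a - 1<..a - 1 + (Suc b - a)} = {a..b}" by auto
  then show ?thesis by (simp add: brk_def)
qed

lemma qfact_nonzero: "(\<And>j m. 0 < m \<Longrightarrow> brk x j m \<noteq> 0) \<Longrightarrow> qfact x k \<noteq> 0"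
  by (simp add: qfact_def)

lemma qfact_Suc: "qfact x (Suc m) = brk x 0 (Suc m) * qfact (\<lambda>i. x (i + 1)) m"
  unfolding qfact_def prod.lessThan_Suc_shift by (simp add: brk_shift)

lemma prod_lessThan_add: "(\<Prod>i<k + (m::nat). f i) = (\<Prod>i<k. f i) * (\<Prod>i<m. f (k + i))"
  by (induction m) (simp_all add: algebra_simps)

lemma qfact_shift_split:
  assumes "k \<le> N"
  shows "qfact (\<lambda>i. x (i + 1)) N
       = (\<Prod>j<k. brk x (1 + j) (N - j)) * qfact (\<lambda>i. x (i + Suc k)) (N - k)"
proof -
  have "qfact (\<lambda>i. x (i + 1)) N = (\<Prod>j<k + (N - k). brk x (1 + j) (N - j))"
    using assms by (simp add: qfact_def brk_shift algebra_simps)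
  also have "\<dots> = (\<Prod>j<k. brk x (1 + j) (N - j)) * qfact (\<lambda>i. x (i + Suc k)) (N - k)"
    by (simp add: prod_lessThan_add qfact_def brk_shift algebra_simps)
  finally show ?thesis .
qed

lemma sum_card_subsets_insert:
  assumes "finite A" "a \<notin> A"
  shows "(\<Sum>S\<in>{S. S \<subseteq> insert a A \<and> card S = Suc k}. f S)
       = (\<Sum>S\<in>{S. S \<subseteq> A \<and> card S = Suc k}. f S) + (\<Sum>S\<in>{S. S \<subseteq> A \<and> card S = k}. f (insert a S))"
proof -
  let ?P = "\<lambda>k. {S. S \<subseteq> A \<and> card S = k}"
  have fin: "finite (?P k)" for k
    by (rule finite_subset[of _ "Pow A"]) (use assms(1) in auto)
  have "{S. S \<subseteq> insert a A \<and> card S = Suc k} = ?P (Suc k) \<union> insert a ` ?P k"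
  proof (intro equalityI subsetI)
    fix S assume S: "S \<in> {S. S \<subseteq> insert a A \<and> card S = Suc k}"
    show "S \<in> ?P (Suc k) \<union> insert a ` ?P k"
    proof (cases "a \<in> S")
      case True
      have "finite S" using S assms(1) by (auto intro: finite_subset[of S "insert a A"])
      then have "S - {a} \<in> ?P k" using S True by auto
      moreover have "S = insert a (S - {a})" using True by auto
      ultimately show ?thesis by (intro UnI2 image_eqI)
    qed (use S in auto)
  next
    fix S assume "S \<in> ?P (Suc k) \<union> insert a ` ?P k"
    then show "S \<in> {S. S \<subseteq> insert a A \<and> card S = Suc k}"
    proof
      assume "S \<in> ?P (Suc k)"
      then show ?thesis by auto
    next
      assume "S \<in> insert a ` ?P k"
      then obtain T where T: "T \<subseteq> A" "card T = k" "S = insert a T" by blast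
      moreover have "finite T" "a \<notin> T" using T(1) assms by (auto intro: finite_subset[of T A])
      ultimately show ?thesis by auto
    qed
  qed
  moreover have "inj_on (insert a) (?P k)"
    using assms(2) by (intro inj_onI) (metis Diff_insert_absorb mem_Collect_eq subsetD)
  moreover have "?P (Suc k) \<inter> insert a ` ?P k = {}" using assms(2) by auto
  ultimately show ?thesis by (simp add: fin sum.union_disjoint sum.reindex)
qed

text \<open>The numerator of \<open>wt_set\<close>, indexed by the elements of \<open>S\<close> rather than by their
positions in the decreasing list: \<open>card {s\<in>S. i \<le> s}\<close> is the position of \<open>i\<close>.\<close>
definition rank_prod :: "(nat \<Rightarrow> 'a::field) \<Rightarrow> nat set \<Rightarrow> 'a" where
  "rank_prod x S = (\<Prod>i\<in>S. brk x (i - 1) (card {s\<in>S. i \<le> s}))"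

lemma rank_prod_insert_min:
  assumes "finite S" "\<forall>s\<in>S. c < s"
  shows "rank_prod x (insert c S) = brk x (c - 1) (Suc (card S)) * rank_prod x S"
proof -
  have "{s\<in>insert c S. c \<le> s} = insert c S" "\<And>i. i \<in> S \<Longrightarrow> {s\<in>insert c S. i \<le> s} = {s\<in>S. i \<le> s}"
    using assms by auto
  moreover have "c \<notin> S" using assms by auto
  ultimately show ?thesis using assms unfolding rank_prod_def by (simp cong: prod.cong)
qed

lemma sum_rank_prod_insert_min:
  assumes "finite A" "\<forall>s\<in>A. c < s"
  shows "(\<Sum>S\<in>{S. S \<subseteq> A \<and> card S = k}. rank_prod x (insert c S))
       = brk x (c - 1) (Suc k) * (\<Sum>S\<in>{S. S \<subseteq> A \<and> card S = k}. rank_prod x S)"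
  unfolding sum_distrib_left
proof (rule sum.cong[OF refl])
  fix S assume S: "S \<in> {S. S \<subseteq> A \<and> card S = k}"
  then have "finite S" "\<forall>s\<in>S. c < s" using assms by (auto intro: finite_subset[of S A])
  then show "rank_prod x (insert c S) = brk x (c - 1) (Suc k) * rank_prod x S"
    using S by (simp add: rank_prod_insert_min)
qed

text \<open>Pascal recursion on whether the least element \<open>a + 1\<close> lies in \<open>S\<close>; the two resulting
brackets combine by \<open>brk_add\<close>.\<close>
lemma sum_rank_prod_card_subsets:
  "(\<Sum>S\<in>{S. S \<subseteq> {Suc a..a + N} \<and> card S = k}. rank_prod x S) = (\<Prod>j<k. brk x (a + j) (N - j))"
proof (induction N arbitrary: a k)
  case 0
  show ?case
  proof (cases k)
    case 0
    then have "{S. S \<subseteq> {Suc a..a} \<and> card S = k} = {{}}" by auto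
    with 0 show ?thesis by (simp add: rank_prod_def)
  next
    case (Suc k')
    then have "{S. S \<subseteq> {Suc a..a + 0} \<and> card S = Suc k'} = {}" by auto
    then show ?thesis unfolding Suc by (simp only: sum.empty) (simp add: prod.lessThan_Suc_shift)
  qed
next
  case (Suc N)
  show ?case
  proof (cases k)
    case 0
    have "{S. S \<subseteq> {Suc a..a + Suc N} \<and> card S = 0} = {{}}" by (auto simp: finite_subset)
    then show ?thesis using 0 by (simp add: rank_prod_def)
  next
    case (Suc k')
    let ?A = "{Suc (Suc a)..Suc a + N}"
    define Q where "Q = (\<Prod>j<k'. brk x (Suc a + j) (N - j))"
    have "{Suc a..a + Suc N} = insert (Suc a) ?A" by auto
    then have "(\<Sum>S\<in>{S. S \<subseteq> {Suc a..a + Suc N} \<and> card S = k}. rank_prod x S)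
        = (\<Sum>S\<in>{S. S \<subseteq> ?A \<and> card S = k}. rank_prod x S)
          + (\<Sum>S\<in>{S. S \<subseteq> ?A \<and> card S = k'}. rank_prod x (insert (Suc a) S))"
      using Suc by (simp add: sum_card_subsets_insert)
    also have "(\<Sum>S\<in>{S. S \<subseteq> ?A \<and> card S = k'}. rank_prod x (insert (Suc a) S))
        = brk x a k * (\<Sum>S\<in>{S. S \<subseteq> ?A \<and> card S = k'}. rank_prod x S)"
      using sum_rank_prod_insert_min[where A = ?A and c = "Suc a" and k = k'] Suc by simp
    also have "(\<Sum>S\<in>{S. S \<subseteq> ?A \<and> card S = k}. rank_prod x S) = Q * brk x (Suc a + k') (N - k')"
      using Suc.IH[of "Suc a" k] Suc by (simp add: Q_def)
    also have "(\<Sum>S\<in>{S. S \<subseteq> ?A \<and> card S = k'}. rank_prod x S) = Q"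
      using Suc.IH[of "Suc a" k'] by (simp add: Q_def)
    also have "Q * brk x (Suc a + k') (N - k') + brk x a k * Q = Q * brk x a (Suc N)"
    proof (cases "k' \<le> N")
      case True
      then have "brk x a k + brk x (Suc a + k') (N - k') = brk x a (Suc N)"
        using brk_add[of x a k "N - k'"] Suc by simp
      then show ?thesis by (metis add.commute distrib_left mult.commute)
    next
      case False
      then have "Q = 0" unfolding Q_def by (intro prod_zero bexI[of _ N]) auto
      then show ?thesis by simp
    qed
    also have "\<dots> = (\<Prod>j<k. brk x (a + j) (Suc N - j))"
      unfolding Q_def Suc prod.lessThan_Suc_shift by (simp del: prod.lessThan_Suc add: algebra_simps)
    finally show ?thesis .
  qed
qed

lemma wt_set_eq_rank_prod:
  assumes "finite S"
  shows "wt_set x S = rank_prod x S / qfact x (card S)"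
proof -
  define L where "L = rev (sorted_list_of_set S)"
  have len: "length L = card S" and setL: "set L = S" and dist: "distinct L"
    unfolding L_def using assms by simp_all
  have "sorted_wrt (>) L"
    unfolding L_def sorted_wrt_rev using strict_sorted_list_of_set by simp
  then have decr: "L ! j < L ! i" if "i < j" "j < length L" for i j
    using that by (simp add: sorted_wrt_iff_nth_less)
  have bij: "bij_betw (\<lambda>j. L ! j) {..<card S} S"
    unfolding bij_betw_def using dist len setL
    by (auto simp: inj_on_def nth_eq_iff_index_eq in_set_conv_nth)
  have rank: "card {s\<in>S. L ! j \<le> s} = Suc j" if "j < card S" for j
  proof -
    have "{s\<in>S. L ! j \<le> s} = (\<lambda>i. L ! i) ` {..j}"
    proof (intro equalityI subsetI)
      fix s assume s: "s \<in> {s\<in>S. L ! j \<le> s}"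
      then obtain i where i: "i < length L" "s = L ! i" using setL by (auto simp: in_set_conv_nth)
      with s decr[of j i] have "i \<le> j" by (cases "j < i") auto
      with i show "s \<in> (\<lambda>i. L ! i) ` {..j}" by auto
    next
      fix s assume "s \<in> (\<lambda>i. L ! i) ` {..j}"
      then obtain i where i: "i \<le> j" "s = L ! i" by auto
      with decr[of i j] that len setL show "s \<in> {s\<in>S. L ! j \<le> s}"
        by (cases "i = j") auto
    qed
    moreover have "inj_on (\<lambda>i. L ! i) {..j}"
      using dist that len by (auto simp: inj_on_def nth_eq_iff_index_eq)
    ultimately show ?thesis by (simp add: card_image)
  qed
  have "rank_prod x S = (\<Prod>j<card S. brk x (L ! j - 1) (card {s\<in>S. L ! j \<le> s}))"
    unfolding rank_prod_def using prod.reindex_bij_betw[OF bij, symmetric] by simp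
  also have "\<dots> = (\<Prod>j<card S. brk x (L ! j - 1) (j + 1))"
    using rank by (intro prod.cong) auto
  finally show ?thesis unfolding wt_set_def Let_def L_def by simp
qed

lemma sum_wt_set_card_subsets:
  assumes "1 \<le> n"
  shows "(\<Sum>S\<in>{S. S \<subseteq> {2..n} \<and> card S = k}. wt_set x S)
       = (\<Prod>j<k. brk x (1 + j) (n - 1 - j)) / qfact x k"
proof -
  have "(\<Sum>S\<in>{S. S \<subseteq> {2..n} \<and> card S = k}. wt_set x S)
      = (\<Sum>S\<in>{S. S \<subseteq> {Suc 1..1 + (n - 1)} \<and> card S = k}. rank_prod x S) / qfact x k"
    using assms unfolding sum_divide_distrib numeral_2_eq_2
    by (intro sum.cong) (auto simp: wt_set_eq_rank_prod finite_subset)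
  then show ?thesis by (simp only: sum_rank_prod_card_subsets)
qed

section \<open>Linear extensions and interleavings\<close>

definition may_precede :: "(nat \<times> nat) set \<Rightarrow> nat \<Rightarrow> nat \<Rightarrow> bool" where
  "may_precede r u w \<longleftrightarrow> (w, u) \<notin> r \<or> w = u"

lemma lin_ext_sorted_wrt:
  "lin_ext n r = {w. distinct w \<and> set w = {1..n} \<and> sorted_wrt (may_precede r) w}"
proof -
  have "(\<forall>p q. p < length w \<and> q < length w \<and> (w ! p, w ! q) \<in> r \<and> w ! p \<noteq> w ! q \<longrightarrow> p < q)
        \<longleftrightarrow> sorted_wrt (may_precede r) w" for w
  proof
    assume "\<forall>p q. p < length w \<and> q < length w \<and> (w ! p, w ! q) \<in> r \<and> w ! p \<noteq> w ! q \<longrightarrow> p < q"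
    then show "sorted_wrt (may_precede r) w"
      unfolding sorted_wrt_iff_nth_less may_precede_def by (meson order.strict_trans not_less_iff_gr_or_eq)
  next
    assume "sorted_wrt (may_precede r) w"
    then show "\<forall>p q. p < length w \<and> q < length w \<and> (w ! p, w ! q) \<in> r \<and> w ! p \<noteq> w ! q \<longrightarrow> p < q"
      unfolding sorted_wrt_iff_nth_less may_precede_def by (metis linorder_neqE_nat)
  qed
  then show ?thesis unfolding lin_ext_def by auto
qed

fun interleave :: "nat set \<Rightarrow> nat \<Rightarrow> 'b list \<Rightarrow> 'b list \<Rightarrow> 'b list" where
  "interleave S i [] ys = ys"
| "interleave S i (x # xs) [] = x # xs"
| "interleave S i (x # xs) (y # ys) =
     (if i \<in> S then x # interleave S (Suc i) xs (y # ys) else y # interleave S (Suc i) (x # xs) ys)"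

lemma filter_interleave_left:
  "\<forall>y\<in>set xs. P y \<Longrightarrow> \<forall>y\<in>set ys. \<not> P y \<Longrightarrow> filter P (interleave S i xs ys) = xs"
  by (induction S i xs ys rule: interleave.induct) auto

lemma filter_interleave_right:
  "\<forall>y\<in>set xs. \<not> P y \<Longrightarrow> \<forall>y\<in>set ys. P y \<Longrightarrow> filter P (interleave S i xs ys) = ys"
  by (induction S i xs ys rule: interleave.induct) auto

lemma set_interleave [simp]: "set (interleave S i xs ys) = set xs \<union> set ys"
  by (induction S i xs ys rule: interleave.induct) auto

lemma distinct_interleave:
  "distinct xs \<Longrightarrow> distinct ys \<Longrightarrow> set xs \<inter> set ys = {} \<Longrightarrow> distinct (interleave S i xs ys)"
  by (induction S i xs ys rule: interleave.induct) auto

lemma sorted_wrt_interleave: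
  "sorted_wrt R xs \<Longrightarrow> sorted_wrt R ys \<Longrightarrow> (\<forall>a\<in>set xs. \<forall>b\<in>set ys. R a b \<and> R b a)
   \<Longrightarrow> sorted_wrt R (interleave S i xs ys)"
  by (induction S i xs ys rule: interleave.induct) auto

definition positions :: "('b \<Rightarrow> bool) \<Rightarrow> nat \<Rightarrow> 'b list \<Rightarrow> nat set" where
  "positions P i xs = {j + i | j. j < length xs \<and> P (xs ! j)}"

lemma positions_iff: "j < length xs \<Longrightarrow> j + i \<in> positions P i xs \<longleftrightarrow> P (xs ! j)"
  unfolding positions_def by auto

lemma card_positions: "card (positions P i xs) = length (filter P xs)"
proof -
  have "positions P i xs = (\<lambda>j. j + i) ` {j. j < length xs \<and> P (xs ! j)}"
    unfolding positions_def by auto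
  then show ?thesis by (simp add: card_image inj_on_def length_filter_conv_card)
qed

lemma positions_Cons:
  "positions P i (z # zs) = (if P z then {i} else {}) \<union> positions P (Suc i) zs"
  unfolding positions_def by (auto simp: less_Suc_eq_0_disj)

lemma positions_interleave:
  assumes "\<forall>y\<in>set xs. P y" "\<forall>y\<in>set ys. \<not> P y"
    and "card (S \<inter> {i..}) = length xs" "S \<subseteq> {..< i + length xs + length ys}"
  shows "positions P i (interleave S i xs ys) = S \<inter> {i..}"
  using assms
proof (induction S i xs ys rule: interleave.induct)
  case (1 S i ys)
  have "finite S" using 1(4) finite_subset by blast
  with 1(2,3) show ?case by (auto simp: positions_def)
next
  case (2 S i x xs)
  have "S \<inter> {i..} \<subseteq> {i..< i + length (x # xs)}" using 2(4) by auto
  moreover have "card (S \<inter> {i..}) = card {i..< i + length (x # xs)}" using 2(3) by simp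
  ultimately have "S \<inter> {i..} = {i..< i + length (x # xs)}"
    using card_subset_eq by (metis finite_atLeastLessThan)
  moreover have "positions P i (x # xs) = {i..< i + length (x # xs)}"
    unfolding positions_def
  proof (intro equalityI subsetI)
    fix y assume "y \<in> {i..< i + length (x # xs)}"
    then show "y \<in> {j + i |j. j < length (x # xs) \<and> P ((x # xs) ! j)}"
      using 2(1) nth_mem[of "y - i" "x # xs"] by (intro CollectI exI[of _ "y - i"]) auto
  qed auto
  ultimately show ?case by simp
next
  case (3 S i x xs y ys)
  have fin: "finite S" using 3(6) finite_subset by blast
  show ?case
  proof (cases "i \<in> S")
    case True
    have e: "S \<inter> {Suc i..} = S \<inter> {i..} - {i}" by auto
    then have "card (S \<inter> {Suc i..}) = length xs" using 3(5) True fin by simp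
    with 3(1)[OF True] 3(3,4,6)
    have IH: "positions P (Suc i) (interleave S (Suc i) xs (y # ys)) = S \<inter> {Suc i..}" by auto
    have m: "interleave S i (x # xs) (y # ys) = x # interleave S (Suc i) xs (y # ys)" using True by simp
    show ?thesis unfolding m positions_Cons IH using True 3(3) e by auto
  next
    case False
    have e: "S \<inter> {Suc i..} = S \<inter> {i..}" using False by (auto simp: Suc_le_eq order_le_less)
    with 3(2)[OF False] 3(3,4,5,6)
    have IH: "positions P (Suc i) (interleave S (Suc i) (x # xs) ys) = S \<inter> {Suc i..}" by auto
    have m: "interleave S i (x # xs) (y # ys) = y # interleave S (Suc i) (x # xs) ys" using False by simp
    show ?thesis unfolding m positions_Cons IH using 3(4) e by auto
  qed
qed

lemma list_eq_by_filters:
  assumes "length xs = length ys" "\<forall>j<length xs. P (xs ! j) = P (ys ! j)"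
    "filter P xs = filter P ys" "filter (\<lambda>u. \<not> P u) xs = filter (\<lambda>u. \<not> P u) ys"
  shows "xs = ys"
  using assms
proof (induction xs arbitrary: ys)
  case (Cons a xs)
  then obtain b ys' where ys: "ys = b # ys'" by (cases ys) auto
  have "P a = P b" using Cons(3)[rule_format, of 0] ys by simp
  then have "a = b" using Cons(4,5) ys by (cases "P a") auto
  moreover have "xs = ys'"
  proof (rule Cons.IH)
    show "length xs = length ys'" "\<forall>j<length xs. P (xs ! j) = P (ys' ! j)"
      using Cons(2,3) ys by force+
    show "filter P xs = filter P ys'" "filter (\<lambda>u. \<not> P u) xs = filter (\<lambda>u. \<not> P u) ys'"
      using Cons(4,5) ys \<open>P a = P b\<close> \<open>a = b\<close> by (cases "P a"; simp)+
  qed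
  ultimately show ?case using ys by simp
qed simp

section \<open>Partial orders on \<open>{1..n}\<close>\<close>

definition root :: "nat \<Rightarrow> (nat \<times> nat) set \<Rightarrow> nat \<Rightarrow> bool" where
  "root n r v \<longleftrightarrow> v \<in> {1..n} \<and> (\<forall>u. (u, v) \<in> r \<longrightarrow> u = v)"

definition down_set :: "(nat \<times> nat) set \<Rightarrow> nat \<Rightarrow> nat set" where
  "down_set r q = {u. (u, q) \<in> r}"

definition hook :: "(nat \<Rightarrow> 'a::field) \<Rightarrow> (nat \<times> nat) set \<Rightarrow> nat \<Rightarrow> 'a" where
  "hook x r i = brk x (Min (up_set r i) - 1) (card (up_set r i))"

context
  fixes n :: nat and r :: "(nat \<times> nat) set"
  assumes po: "partial_order_on {1..n} r"
begin

lemma po_carrier: "(p, q) \<in> r \<Longrightarrow> p \<in> {1..n} \<and> q \<in> {1..n}"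
  using partial_order_onD(4)[OF po] by blast

lemma po_refl: "p \<in> {1..n} \<Longrightarrow> (p, p) \<in> r"
  by (rule refl_onD[OF partial_order_onD(1)[OF po]])

lemma po_trans: "(p, q) \<in> r \<Longrightarrow> (q, s) \<in> r \<Longrightarrow> (p, s) \<in> r"
  by (rule transD[OF partial_order_onD(2)[OF po]])

lemma po_antisym: "(p, q) \<in> r \<Longrightarrow> (q, p) \<in> r \<Longrightarrow> p = q"
  by (rule antisymD[OF partial_order_onD(3)[OF po]])

lemma up_set_subset: "up_set r i \<subseteq> {1..n}"
  unfolding up_set_def using po_carrier by blast

lemma finite_up_set: "finite (up_set r i)"
  using up_set_subset by (rule finite_subset) simp

lemma finite_down_set: "finite (down_set r i)"
  by (rule finite_subset[of _ "{1..n}"]) (auto simp: down_set_def dest: po_carrier)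

lemma card_down_set_less:
  assumes "(w, v) \<in> r" "w \<noteq> v"
  shows "card (down_set r w) < card (down_set r v)"
proof (rule psubset_card_mono[OF finite_down_set])
  show "down_set r w \<subset> down_set r v"
  proof
    show "down_set r w \<subseteq> down_set r v" using po_trans assms(1) by (auto simp: down_set_def)
    have "v \<in> down_set r v" using po_refl po_carrier[OF assms(1)] by (simp add: down_set_def)
    moreover have "v \<notin> down_set r w" using po_antisym assms by (auto simp: down_set_def)
    ultimately show "down_set r w \<noteq> down_set r v" by blast
  qed
qed

lemma card_up_set_less:
  assumes "(v, w) \<in> r" "v \<noteq> w"
  shows "card (up_set r w) < card (up_set r v)"
proof (rule psubset_card_mono[OF finite_up_set])
  show "up_set r w \<subset> up_set r v"
  proof
    show "up_set r w \<subseteq> up_set r v" using po_trans assms(1) by (auto simp: up_set_def)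
    have "v \<in> up_set r v" using po_refl po_carrier[OF assms(1)] by (simp add: up_set_def)
    moreover have "v \<notin> up_set r w" using po_antisym assms by (auto simp: up_set_def)
    ultimately show "up_set r w \<noteq> up_set r v" by blast
  qed
qed

lemma finite_roots: "finite {v. root n r v}"
  by (rule finite_subset[of _ "{1..n}"]) (auto simp: root_def)

lemma hook_nonzero:
  assumes "\<And>j m. 0 < m \<Longrightarrow> brk x j m \<noteq> 0" "i \<in> {1..n}"
  shows "hook x r i \<noteq> 0"
proof -
  have "i \<in> up_set r i" using po_refl[OF assms(2)] by (simp add: up_set_def)
  then have "card (up_set r i) > 0" using finite_up_set card_gt_0_iff by blast
  then show ?thesis unfolding hook_def by (rule assms(1))
qed

lemma ex_root_below:
  assumes "q \<in> {1..n}"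
  shows "\<exists>v. root n r v \<and> (v, q) \<in> r"
proof -
  have "\<exists>v. (v, q) \<in> r \<and> (\<forall>w. (w, q) \<in> r \<longrightarrow> card (down_set r v) \<le> card (down_set r w))"
    using po_refl[OF assms] by (rule ex_has_least_nat)
  then obtain v where v: "(v, q) \<in> r" and vmin: "\<And>w. (w, q) \<in> r \<Longrightarrow> card (down_set r v) \<le> card (down_set r w)"
    by blast
  have "w = v" if wv: "(w, v) \<in> r" for w
    using card_down_set_less[OF wv] vmin[OF po_trans[OF wv v]] by fastforce
  with v po_carrier[OF v] show ?thesis unfolding root_def by blast
qed

lemma ex_cover_above:
  assumes "(u, q) \<in> r" "u \<noteq> q"
  shows "\<exists>c. (u, c) \<in> r \<and> covers r q c"
proof -
  let ?P = "\<lambda>c. (u, c) \<in> r \<and> (c, q) \<in> r \<and> c \<noteq> q"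
  have "?P u" using assms po_refl po_carrier by blast
  then have "\<exists>c. ?P c \<and> (\<forall>k. ?P k \<longrightarrow> card (up_set r c) \<le> card (up_set r k))"
    by (rule ex_has_least_nat)
  then obtain c where c: "?P c" and cmin: "\<And>k. ?P k \<Longrightarrow> card (up_set r c) \<le> card (up_set r k)"
    by blast
  have "\<not> (k \<noteq> c \<and> k \<noteq> q \<and> (c, k) \<in> r \<and> (k, q) \<in> r)" for k
  proof
    assume k: "k \<noteq> c \<and> k \<noteq> q \<and> (c, k) \<in> r \<and> (k, q) \<in> r"
    then have "?P k" using c po_trans by blast
    with k card_up_set_less[of c k] cmin show False by fastforce
  qed
  with c show ?thesis unfolding covers_def by blast
qed

end

text \<open>In a forest every element lies above exactly one root: two roots below \<open>q\<close> lie below the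
unique element covered by \<open>q\<close>, and we descend.\<close>
lemma root_below_unique:
  assumes fp: "forest_poset n r"
  shows "root n r v1 \<Longrightarrow> root n r v2 \<Longrightarrow> (v1, q) \<in> r \<Longrightarrow> (v2, q) \<in> r \<Longrightarrow> v1 = v2"
proof (induction "card (down_set r q)" arbitrary: q rule: less_induct)
  case less
  have po: "partial_order_on {1..n} r" using fp unfolding forest_poset_def by blast
  show ?case
  proof (cases "v1 = q \<or> v2 = q")
    case True
    with less.prems show ?thesis unfolding root_def by blast
  next
    case False
    obtain c1 where c1: "(v1, c1) \<in> r" "covers r q c1" using ex_cover_above[OF po less.prems(3)] False by blast
    obtain c2 where c2: "(v2, c2) \<in> r" "covers r q c2" using ex_cover_above[OF po less.prems(4)] False by blast
    have "c1 = c2" using fp c1(2) c2(2) unfolding forest_poset_def by blast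
    have cq: "(c1, q) \<in> r" "c1 \<noteq> q" using c1(2) unfolding covers_def by auto
    then have "card (down_set r c1) < card (down_set r q)" by (rule card_down_set_less[OF po])
    then show ?thesis using less.hyps[of c1] less.prems c1(1) c2(1) \<open>c1 = c2\<close> by blast
  qed
qed

context
  fixes n :: nat and r :: "(nat \<times> nat) set"
  assumes po: "partial_order_on {1..n} r" and reclab: "recursively_labelled n r"
begin

lemma up_set_eq_interval:
  assumes "i \<in> {1..n}"
  obtains a b where "up_set r i = {a..b}" "1 \<le> a" "a \<le> i" "i \<le> b"
proof -
  obtain a b where ab: "up_set r i = {a..b}" using reclab assms unfolding recursively_labelled_def by blast
  have "i \<in> up_set r i" using po_refl[OF po assms] by (simp add: up_set_def)
  moreover have "a \<ge> 1" if "a \<le> b" using up_set_subset[OF po, of i] ab that by auto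
  ultimately show ?thesis using that ab by auto
qed

lemma hook_eq_sum_up_set:
  assumes "i \<in> {1..n}"
  shows "hook x r i = (\<Sum>j\<in>up_set r i. x j)"
proof -
  obtain a b where ab: "up_set r i = {a..b}" "1 \<le> a" "a \<le> i" "i \<le> b"
    using up_set_eq_interval[OF assms] .
  then have "Min (up_set r i) = a" "card (up_set r i) = Suc b - a" by (auto intro: Min_eqI)
  with ab(1) show ?thesis unfolding hook_def using brk_atLeastAtMost[OF ab(2), of x b] by simp
qed

lemma up_set_between:
  assumes "(i, j) \<in> r" "min i j \<le> v" "v \<le> max i j"
  shows "(i, v) \<in> r"
proof -
  have "i \<in> {1..n}" using po_carrier[OF po assms(1)] by simp
  then obtain a b where ab: "up_set r i = {a..b}" "a \<le> i" "i \<le> b" by (rule up_set_eq_interval)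
  moreover have "j \<in> up_set r i" using assms(1) by (simp add: up_set_def)
  ultimately have "v \<in> up_set r i" using assms(2,3) by auto
  then show ?thesis by (simp add: up_set_def)
qed

lemma incomparable_across_root:
  assumes "root n r v" "p < v" "v < q"
  shows "(p, q) \<notin> r" "(q, p) \<notin> r"
  using up_set_between[of p q v] up_set_between[of q p v] assms unfolding root_def by auto

lemma up_set_below_root: "root n r v \<Longrightarrow> i < v \<Longrightarrow> (i, j) \<in> r \<Longrightarrow> j < v"
  using incomparable_across_root[of v i j] unfolding root_def by (metis linorder_neqE_nat)

lemma up_set_above_root: "root n r v \<Longrightarrow> v < i \<Longrightarrow> (i, j) \<in> r \<Longrightarrow> v < j"
  using incomparable_across_root[of v j i] unfolding root_def by (metis linorder_neqE_nat)

end

lemma sum_hook_roots: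
  assumes fp: "forest_poset n r" and reclab: "recursively_labelled n r"
  shows "(\<Sum>v\<in>{v. root n r v}. hook x r v) = brk x 0 n"
proof -
  have po: "partial_order_on {1..n} r" using fp unfolding forest_poset_def by blast
  have "(\<Sum>v\<in>{v. root n r v}. hook x r v) = (\<Sum>v\<in>{v. root n r v}. \<Sum>j\<in>up_set r v. x j)"
    using hook_eq_sum_up_set[OF po reclab] by (intro sum.cong) (auto simp: root_def)
  also have "\<dots> = (\<Sum>j\<in>(\<Union>v\<in>{v. root n r v}. up_set r v). x j)"
  proof (rule sum.UNION_disjoint[symmetric])
    show "\<forall>v\<in>{v. root n r v}. \<forall>w\<in>{v. root n r v}. v \<noteq> w \<longrightarrow> up_set r v \<inter> up_set r w = {}"
      using root_below_unique[OF fp] by (auto simp: up_set_def)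
  qed (simp_all add: finite_roots[OF po] finite_up_set[OF po])
  also have "(\<Union>v\<in>{v. root n r v}. up_set r v) = {0<..0 + n}"
  proof (intro equalityI subsetI)
    fix q assume "q \<in> {0<..0 + n}"
    then show "q \<in> (\<Union>v\<in>{v. root n r v}. up_set r v)"
      using ex_root_below[OF po, of q] by (auto simp: up_set_def)
  qed (auto dest: up_set_subset[OF po, THEN subsetD])
  finally show ?thesis by (simp add: brk_def)
qed

section \<open>Subposets on intervals\<close>

definition subposet :: "nat \<Rightarrow> nat \<Rightarrow> (nat \<times> nat) set \<Rightarrow> (nat \<times> nat) set" where
  "subposet c m r = {(p, q). p \<in> {1..m} \<and> q \<in> {1..m} \<and> (p + c, q + c) \<in> r}"

lemma may_precede_subposet:
  "u \<in> {1..m} \<Longrightarrow> w \<in> {1..m} \<Longrightarrow> may_precede (subposet c m r) u w \<longleftrightarrow> may_precede r (u + c) (w + c)"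
  by (auto simp: may_precede_def subposet_def)

lemma partial_order_subposet:
  assumes po: "partial_order_on {1..n} r" and "c + m \<le> n"
  shows "partial_order_on {1..m} (subposet c m r)"
  unfolding partial_order_on_def preorder_on_def
proof (intro conjI)
  show "subposet c m r \<subseteq> {1..m} \<times> {1..m}" by (auto simp: subposet_def)
  show "refl_on {1..m} (subposet c m r)"
    using po_refl[OF po] assms(2) by (auto simp: refl_on_def subposet_def)
  show "trans (subposet c m r)"
    using po_trans[OF po] by (auto simp: trans_def subposet_def)
  show "antisym (subposet c m r)"
    by (auto simp: antisym_def subposet_def dest: po_antisym[OF po])
qed

context
  fixes n m c :: nat and r :: "(nat \<times> nat) set"
  assumes po: "partial_order_on {1..n} r" and le: "c + m \<le> n"
    and up_closed: "\<And>i j. i \<in> {c<..c + m} \<Longrightarrow> (i, j) \<in> r \<Longrightarrow> j \<in> {c<..c + m}"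
begin

lemma image_up_set_subposet:
  assumes "i \<in> {1..m}"
  shows "(\<lambda>j. j + c) ` up_set (subposet c m r) i = up_set r (i + c)"
proof (intro equalityI subsetI)
  fix j assume j: "j \<in> up_set r (i + c)"
  then have "j \<in> {c<..c + m}" using up_closed[of "i + c" j] assms by (simp add: up_set_def)
  with j assms have "j - c \<in> up_set (subposet c m r) i" by (auto simp: up_set_def subposet_def)
  then show "j \<in> (\<lambda>j. j + c) ` up_set (subposet c m r) i"
    by (rule rev_image_eqI) (use \<open>j \<in> {c<..c + m}\<close> in simp)
qed (auto simp: up_set_def subposet_def)

lemma covers_subposet:
  assumes "covers (subposet c m r) j i"
  shows "covers r (j + c) (i + c)"
proof -
  have ij: "(i + c, j + c) \<in> r" "i \<noteq> j" "i \<in> {1..m}" "j \<in> {1..m}"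
    using assms unfolding covers_def subposet_def by auto
  have "l \<notin> {c<..c + m}" if "l \<noteq> i + c" "l \<noteq> j + c" "(i + c, l) \<in> r" "(l, j + c) \<in> r" for l
  proof
    assume "l \<in> {c<..c + m}"
    then have "(i, l - c) \<in> subposet c m r" "(l - c, j) \<in> subposet c m r" "l - c \<noteq> i" "l - c \<noteq> j"
      using that ij unfolding subposet_def by auto
    with assms show False unfolding covers_def by blast
  qed
  moreover have "l \<in> {c<..c + m}" if "(i + c, l) \<in> r" for l
    using up_closed[OF _ that] ij(3) by simp
  ultimately show ?thesis using ij(1,2) unfolding covers_def by fastforce
qed

lemma forest_poset_subposet:
  assumes "forest_poset n r"
  shows "forest_poset m (subposet c m r)"
proof -
  have "i = i'" if "covers (subposet c m r) j i" "covers (subposet c m r) j i'" for i i' j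
  proof -
    have "i + c = i' + c"
      using assms covers_subposet[OF that(1)] covers_subposet[OF that(2)] unfolding forest_poset_def by blast
    then show ?thesis by simp
  qed
  then show ?thesis unfolding forest_poset_def using partial_order_subposet[OF po le] by blast
qed

lemma recursively_labelled_subposet:
  assumes "recursively_labelled n r"
  shows "recursively_labelled m (subposet c m r)"
  unfolding recursively_labelled_def
proof
  fix i assume i: "i \<in> {1..m}"
  then have "i + c \<in> {1..n}" using le by auto
  then obtain a b where ab: "up_set r (i + c) = {a..b}" "a \<le> i + c" "i + c \<le> b"
    by (rule up_set_eq_interval[OF po assms])
  then have "a \<in> up_set r (i + c)" by simp
  then have "c < a" using up_closed[of "i + c" a] i by (simp add: up_set_def)
  have "up_set (subposet c m r) i = {a - c..b - c}"
  proof (rule set_eqI)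
    fix j
    have "j \<in> up_set (subposet c m r) i \<longleftrightarrow> j + c \<in> (\<lambda>j. j + c) ` up_set (subposet c m r) i"
      by (rule inj_image_mem_iff[symmetric]) (simp add: inj_on_def)
    also have "\<dots> \<longleftrightarrow> j \<in> {a - c..b - c}"
      unfolding image_up_set_subposet[OF i] ab(1) using \<open>c < a\<close> by auto
    finally show "j \<in> up_set (subposet c m r) i \<longleftrightarrow> j \<in> {a - c..b - c}" .
  qed
  then show "\<exists>a b. up_set (subposet c m r) i = {a..b}" by blast
qed

lemma hook_subposet:
  assumes "i \<in> {1..m}"
  shows "hook (\<lambda>j. x (j + c)) (subposet c m r) i = hook x r (i + c)"
proof -
  let ?U = "up_set (subposet c m r) i"
  have poU: "partial_order_on {1..m} (subposet c m r)" by (rule partial_order_subposet[OF po le])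
  have "i \<in> ?U" using po_refl[OF poU assms] by (simp add: up_set_def)
  moreover have fin: "finite ?U" by (rule finite_up_set[OF poU])
  ultimately have min: "Min ((\<lambda>j. j + c) ` ?U) = Min ?U + c" and "Min ?U \<in> ?U"
    using Min_add_commute[of ?U "\<lambda>j. j" c] Min_in by auto
  have card: "card ((\<lambda>j. j + c) ` ?U) = card ?U" by (simp add: card_image)
  have "1 \<le> Min ?U" using \<open>Min ?U \<in> ?U\<close> up_set_subset[OF poU, of i] by auto
  have "hook x r (i + c) = brk x (Min ?U + c - 1) (card ?U)"
    unfolding hook_def image_up_set_subposet[OF assms, symmetric] min card ..
  also have "\<dots> = brk x (Min ?U - 1 + c) (card ?U)" using \<open>1 \<le> Min ?U\<close> by simp
  finally show ?thesis unfolding hook_def brk_shift ..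
qed

end

section \<open>Splitting a linear extension at its first letter\<close>

lemma finite_lin_ext: "finite (lin_ext n r)"
proof (rule finite_subset)
  show "lin_ext n r \<subseteq> {xs. set xs \<subseteq> {1..n} \<and> length xs \<le> n}"
  proof
    fix w assume "w \<in> lin_ext n r"
    then have "distinct w" "set w = {1..n}" unfolding lin_ext_def by auto
    then show "w \<in> {xs. set xs \<subseteq> {1..n} \<and> length xs \<le> n}" using distinct_card[of w] by simp
  qed
qed (rule finite_lists_length_le, simp)

lemma root_if_lin_ext_Cons:
  assumes po: "partial_order_on {1..n} r" and w: "v # rest \<in> lin_ext n r"
  shows "root n r v"
  unfolding root_def
proof (intro conjI allI impI)
  have w': "set (v # rest) = {1..n}" "sorted_wrt (may_precede r) (v # rest)"
    using w unfolding lin_ext_sorted_wrt by auto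
  then show "v \<in> {1..n}" by auto
  fix u assume "(u, v) \<in> r"
  moreover have "u \<in> set (v # rest)" using po_carrier[OF po \<open>(u, v) \<in> r\<close>] w' by simp
  ultimately show "u = v" using w' unfolding may_precede_def by auto
qed

lemma lin_ext_eq_UN_roots:
  assumes po: "partial_order_on {1..n} r" and "1 \<le> n"
  shows "lin_ext n r = (\<Union>v\<in>{v. root n r v}. (#) v ` {rest. v # rest \<in> lin_ext n r})"
proof (intro equalityI subsetI)
  fix w assume w: "w \<in> lin_ext n r"
  have "w \<noteq> []" using w assms(2) unfolding lin_ext_def by auto
  then obtain v rest where "w = v # rest" by (cases w) auto
  with w root_if_lin_ext_Cons[OF po] show "w \<in> (\<Union>v\<in>{v. root n r v}. (#) v ` {rest. v # rest \<in> lin_ext n r})" by auto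
qed auto

lemma sum_lin_ext_first_letter:
  assumes po: "partial_order_on {1..n} r" and "1 \<le> n"
  shows "(\<Sum>w\<in>lin_ext n r. f w)
       = (\<Sum>v\<in>{v. root n r v}. \<Sum>rest\<in>{rest. v # rest \<in> lin_ext n r}. f (v # rest))"
proof -
  let ?R = "\<lambda>v. {rest. v # rest \<in> lin_ext n r}"
  have fin: "finite (?R v)" for v
    using finite_vimageI[OF finite_lin_ext, of "(#) v" n r] by (simp add: vimage_def)
  have "(\<Sum>w\<in>lin_ext n r. f w) = (\<Sum>w\<in>(\<Union>v\<in>{v. root n r v}. (#) v ` ?R v). f w)"
    by (rule arg_cong[OF lin_ext_eq_UN_roots[OF assms]])
  also have "\<dots> = (\<Sum>v\<in>{v. root n r v}. \<Sum>w\<in>(#) v ` ?R v. f w)"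
    by (rule sum.UNION_disjoint) (use finite_roots[OF po] fin in auto)
  also have "\<dots> = (\<Sum>v\<in>{v. root n r v}. \<Sum>rest\<in>?R v. f (v # rest))"
    by (rule sum.cong[OF refl]) (simp add: sum.reindex)
  finally show ?thesis .
qed

section \<open>The decomposition at a root\<close>

text \<open>The data \<open>(S(w), a, b)\<close> in the definition of the weight of \<open>w = v # rest\<close>; positions in
\<open>w\<close> are \<open>1\<close>-based, so \<open>rest\<close> starts at position \<open>2\<close>.\<close>
definition split_word :: "nat \<Rightarrow> nat list \<Rightarrow> nat set \<times> nat list \<times> nat list" where
  "split_word v rest =
     (positions (\<lambda>u. u < v) 2 rest, filter (\<lambda>u. u < v) rest, map (\<lambda>u. u - v) (filter (\<lambda>u. v < u) rest))"

lemma wt_perm_Cons_split_word: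
  "wt_perm x (v # rest) = (case split_word v rest of (S, a, b) \<Rightarrow> wt_set x S * wt_perm x a * wt_perm (\<lambda>i. x (i + v)) b)"
  by (simp add: split_word_def positions_def)

locale forest_with_root =
  fixes n :: nat and r :: "(nat \<times> nat) set" and k :: nat
  assumes forest: "forest_poset n r" and reclab: "recursively_labelled n r"
    and root: "root n r (Suc k)"
begin

abbreviation lower :: "(nat \<times> nat) set" where "lower \<equiv> subposet 0 k r"
abbreviation upper :: "(nat \<times> nat) set" where "upper \<equiv> subposet (Suc k) (n - Suc k) r"

lemma po: "partial_order_on {1..n} r"
  using forest unfolding forest_poset_def by blast

lemma k_less: "k < n"
  using root unfolding root_def by auto

lemma lower_up_closed: "i \<in> {0<..0 + k} \<Longrightarrow> (i, j) \<in> r \<Longrightarrow> j \<in> {0<..0 + k}"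
  using up_set_below_root[OF po reclab root, of i j] po_carrier[OF po, of i j] by auto

lemma upper_up_closed:
  "i \<in> {Suc k<..Suc k + (n - Suc k)} \<Longrightarrow> (i, j) \<in> r \<Longrightarrow> j \<in> {Suc k<..Suc k + (n - Suc k)}"
  using up_set_above_root[OF po reclab root, of i j] po_carrier[OF po, of i j] by auto

lemma lower_le: "0 + k \<le> n" and upper_le: "Suc k + (n - Suc k) \<le> n"
  using k_less by simp_all

lemma forest_poset_lower: "forest_poset k lower"
  by (rule forest_poset_subposet[OF po lower_le lower_up_closed forest])

lemma forest_poset_upper: "forest_poset (n - Suc k) upper"
  by (rule forest_poset_subposet[OF po upper_le upper_up_closed forest])

lemma recursively_labelled_lower: "recursively_labelled k lower"
  by (rule recursively_labelled_subposet[OF po lower_le lower_up_closed reclab])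

lemma recursively_labelled_upper: "recursively_labelled (n - Suc k) upper"
  by (rule recursively_labelled_subposet[OF po upper_le upper_up_closed reclab])

lemma hook_lower: "i \<in> {1..k} \<Longrightarrow> hook x lower i = hook x r i"
  using hook_subposet[OF po lower_le lower_up_closed, where x = x] by simp

lemma hook_upper: "i \<in> {1..n - Suc k} \<Longrightarrow> hook (\<lambda>j. x (j + Suc k)) upper i = hook x r (i + Suc k)"
  by (rule hook_subposet[OF po upper_le upper_up_closed])

lemma lin_ext_Cons_root:
  assumes "Suc k # rest \<in> lin_ext n r"
  shows "distinct rest" "set rest = {1..n} - {Suc k}" "sorted_wrt (may_precede r) rest"
    "length rest = n - 1"
proof -
  have w: "distinct (Suc k # rest)" "set (Suc k # rest) = {1..n}" "sorted_wrt (may_precede r) (Suc k # rest)"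
    using assms unfolding lin_ext_sorted_wrt by auto
  then show "distinct rest" "set rest = {1..n} - {Suc k}" "sorted_wrt (may_precede r) rest" by auto
  then show "length rest = n - 1" using distinct_card[of rest] k_less by simp
qed

lemma atLeastAtMost_split_root: "{1..n} = {1..k} \<union> insert (Suc k) {Suc (Suc k)..n}"
  using k_less by auto

lemma upper_image: "{Suc (Suc k)..n} = (\<lambda>j. j + Suc k) ` {1..n - Suc k}"
  using image_add_atLeastAtMost'[of "Suc k" 1 "n - Suc k"] k_less by simp

abbreviation split_range :: "(nat set \<times> nat list \<times> nat list) set" where
  "split_range \<equiv> {S. S \<subseteq> {2..n} \<and> card S = k} \<times> lin_ext k lower \<times> lin_ext (n - Suc k) upper"

lemma split_word_in_range:
  assumes "Suc k # rest \<in> lin_ext n r"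
  shows "split_word (Suc k) rest \<in> split_range"
proof -
  note w = lin_ext_Cons_root[OF assms]
  let ?a = "filter (\<lambda>u. u < Suc k) rest" and ?b = "filter (\<lambda>u. Suc k < u) rest"
  have sa: "set ?a = {1..k}" unfolding set_filter w(2) using k_less by auto
  have sb: "set ?b = (\<lambda>j. j + Suc k) ` {1..n - Suc k}" unfolding set_filter w(2) upper_image[symmetric] by auto
  have "length ?a = k" using distinct_card[of ?a] w(1) sa by simp
  then have "positions (\<lambda>u. u < Suc k) 2 rest \<subseteq> {2..n} \<and> card (positions (\<lambda>u. u < Suc k) 2 rest) = k"
    unfolding card_positions using w(4) k_less by (auto simp: positions_def)
  moreover have "?a \<in> lin_ext k lower"
    unfolding lin_ext_sorted_wrt
  proof (intro CollectI conjI)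
    show "distinct ?a" "set ?a = {1..k}" using w(1) sa by auto
    have "sorted_wrt (may_precede r) ?a" using w(3) by (rule sorted_wrt_filter)
    then show "sorted_wrt (may_precede lower) ?a"
    proof (rule sorted_wrt_mono_rel[rotated])
      fix u v assume "u \<in> set ?a" "v \<in> set ?a" "may_precede r u v"
      then show "may_precede lower u v" unfolding sa using may_precede_subposet[of u k v 0 r] by simp
    qed
  qed
  moreover have "map (\<lambda>u. u - Suc k) ?b \<in> lin_ext (n - Suc k) upper"
    unfolding lin_ext_sorted_wrt
  proof (intro CollectI conjI)
    show "distinct (map (\<lambda>u. u - Suc k) ?b)" using w(1) by (auto simp: distinct_map inj_on_def)
    show "set (map (\<lambda>u. u - Suc k) ?b) = {1..n - Suc k}" unfolding set_map sb image_image by simp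
    show "sorted_wrt (may_precede upper) (map (\<lambda>u. u - Suc k) ?b)"
      unfolding sorted_wrt_map using sorted_wrt_filter[OF w(3), of "\<lambda>u. Suc k < u"]
    proof (rule sorted_wrt_mono_rel[rotated])
      fix u v assume "u \<in> set ?b" "v \<in> set ?b" "may_precede r u v"
      then show "may_precede upper (u - Suc k) (v - Suc k)"
        unfolding sb using may_precede_subposet[of _ "n - Suc k" _ "Suc k" r] by auto
    qed
  qed
  ultimately show ?thesis unfolding split_word_def by simp
qed

lemma inj_on_split_word: "inj_on (split_word (Suc k)) {rest. Suc k # rest \<in> lin_ext n r}"
proof (rule inj_onI)
  fix r1 r2 assume "r1 \<in> {rest. Suc k # rest \<in> lin_ext n r}" "r2 \<in> {rest. Suc k # rest \<in> lin_ext n r}"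
    and eq: "split_word (Suc k) r1 = split_word (Suc k) r2"
  then have w1: "set r1 = {1..n} - {Suc k}" "length r1 = n - 1"
    and w2: "set r2 = {1..n} - {Suc k}" "length r2 = n - 1"
    using lin_ext_Cons_root by simp_all
  have S: "positions (\<lambda>u. u < Suc k) 2 r1 = positions (\<lambda>u. u < Suc k) 2 r2"
    and A: "filter (\<lambda>u. u < Suc k) r1 = filter (\<lambda>u. u < Suc k) r2"
    and "map (\<lambda>u. u - Suc k) (filter (\<lambda>u. Suc k < u) r1)
       = map (\<lambda>u. u - Suc k) (filter (\<lambda>u. Suc k < u) r2)"
    using eq unfolding split_word_def by simp_all
  then have B: "filter (\<lambda>u. Suc k < u) r1 = filter (\<lambda>u. Suc k < u) r2"
    by (subst (asm) inj_on_map_eq_map) (auto simp: inj_on_def)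
  have filter_not_small: "filter (\<lambda>u. \<not> u < Suc k) ri = filter (\<lambda>u. Suc k < u) ri"
    if "Suc k \<notin> set ri" for ri
  proof (rule filter_cong)
    fix u assume "u \<in> set ri"
    then have "u \<noteq> Suc k" using that by auto
    then show "(\<not> u < Suc k) = (Suc k < u)" by auto
  qed simp
  show "r1 = r2"
  proof (rule list_eq_by_filters[where P = "\<lambda>u. u < Suc k"])
    show "length r1 = length r2" using w1(2) w2(2) by simp
    show "\<forall>j<length r1. (r1 ! j < Suc k) = (r2 ! j < Suc k)"
      using positions_iff[of _ r1 2 "\<lambda>u. u < Suc k"] positions_iff[of _ r2 2 "\<lambda>u. u < Suc k"] S w1(2) w2(2) by auto
    show "filter (\<lambda>u. \<not> u < Suc k) r1 = filter (\<lambda>u. \<not> u < Suc k) r2"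
      using filter_not_small[of r1] filter_not_small[of r2] B w1(1) w2(1) by simp
  qed (rule A)
qed

lemma Cons_root_interleave_in_lin_ext:
  assumes a: "a \<in> lin_ext k lower" and b: "b \<in> lin_ext (n - Suc k) upper"
  shows "Suc k # interleave S i a (map (\<lambda>u. u + Suc k) b) \<in> lin_ext n r"
proof -
  define b' where "b' = map (\<lambda>u. u + Suc k) b"
  have a': "distinct a" "set a = {1..k}" "sorted_wrt (may_precede lower) a"
    using a unfolding lin_ext_sorted_wrt by auto
  have b: "set b = {1..n - Suc k}" "sorted_wrt (may_precede upper) b"
    using b unfolding lin_ext_sorted_wrt by auto
  have b': "distinct b'" "set b' = {Suc (Suc k)..n}"
    using assms(2) unfolding lin_ext_sorted_wrt b'_def upper_image by (auto simp: distinct_map inj_on_def)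
  have "Suc k # interleave S i a b' \<in> lin_ext n r"
    unfolding lin_ext_sorted_wrt
  proof (intro CollectI conjI)
    have "distinct (interleave S i a b')"
      by (rule distinct_interleave[OF a'(1) b'(1)]) (use a'(2) b'(2) in auto)
    then show "distinct (Suc k # interleave S i a b')" using a'(2) b'(2) by simp
    show "set (Suc k # interleave S i a b') = {1..n}"
      by (subst atLeastAtMost_split_root) (simp add: a'(2) b'(2))
    have "sorted_wrt (may_precede r) a"
      using a'(3)
    proof (rule sorted_wrt_mono_rel[rotated])
      fix u v assume "u \<in> set a" "v \<in> set a" "may_precede lower u v"
      then show "may_precede r u v" unfolding a'(2) using may_precede_subposet[of u k v 0 r] by simp
    qed
    moreover have "sorted_wrt (may_precede r) b'"
      unfolding b'_def sorted_wrt_map using b(2)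
    proof (rule sorted_wrt_mono_rel[rotated])
      fix u v assume "u \<in> set b" "v \<in> set b" "may_precede upper u v"
      then show "may_precede r (u + Suc k) (v + Suc k)"
        unfolding b(1) using may_precede_subposet[of u "n - Suc k" v "Suc k" r] by simp
    qed
    moreover have "\<forall>u\<in>set a. \<forall>w\<in>set b'. may_precede r u w \<and> may_precede r w u"
      using incomparable_across_root[OF po reclab root] a'(2) b'(2)
      unfolding may_precede_def by auto
    ultimately have "sorted_wrt (may_precede r) (interleave S i a b')"
      by (rule sorted_wrt_interleave)
    moreover have "may_precede r (Suc k) y" for y
      using root unfolding root_def may_precede_def by auto
    ultimately show "sorted_wrt (may_precede r) (Suc k # interleave S i a b')" by simp
  qed
  then show ?thesis unfolding b'_def .
qed

lemma split_word_surj: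
  assumes "(S, a, b) \<in> split_range"
  shows "\<exists>rest. Suc k # rest \<in> lin_ext n r \<and> split_word (Suc k) rest = (S, a, b)"
proof -
  have S: "S \<subseteq> {2..n}" "card S = k" and a: "a \<in> lin_ext k lower" and b: "b \<in> lin_ext (n - Suc k) upper"
    using assms by auto
  define b' where "b' = map (\<lambda>u. u + Suc k) b"
  have small_a: "\<forall>y\<in>set a. y < Suc k" using a unfolding lin_ext_def by auto
  have large_b': "\<forall>y\<in>set b'. Suc k < y" "\<forall>y\<in>set b'. \<not> y < Suc k"
    using b unfolding lin_ext_def b'_def by auto
  have "length a = k" using a distinct_card[of a] unfolding lin_ext_def by auto
  moreover have "length b' = n - Suc k" using b distinct_card[of b] unfolding lin_ext_def b'_def by auto
  moreover have S2: "S \<inter> {2..} = S" using S(1) by auto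
  ultimately have card_S: "card (S \<inter> {2..}) = length a" and S_bound: "S \<subseteq> {..<2 + length a + length b'}"
    using S k_less by auto
  define rest where "rest = interleave S 2 a b'"
  have "positions (\<lambda>u. u < Suc k) 2 rest = S"
    unfolding rest_def positions_interleave[OF small_a large_b'(2) card_S S_bound] S2 ..
  moreover have "filter (\<lambda>u. u < Suc k) rest = a"
    unfolding rest_def by (rule filter_interleave_left[OF small_a large_b'(2)])
  moreover have "filter (\<lambda>u. Suc k < u) rest = b'"
    unfolding rest_def by (rule filter_interleave_right) (use small_a large_b'(1) in auto)
  moreover have "Suc k # rest \<in> lin_ext n r"
    unfolding rest_def b'_def by (rule Cons_root_interleave_in_lin_ext[OF a b])
  moreover have "map (\<lambda>u. u - Suc k) b' = b" unfolding b'_def by (simp add: comp_def)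
  ultimately show ?thesis unfolding split_word_def by auto
qed

lemma bij_betw_split_word:
  "bij_betw (split_word (Suc k)) {rest. Suc k # rest \<in> lin_ext n r} split_range"
  unfolding bij_betw_def
proof
  show "split_word (Suc k) ` {rest. Suc k # rest \<in> lin_ext n r} = split_range"
  proof (intro equalityI subsetI)
    fix t assume "t \<in> split_word (Suc k) ` {rest. Suc k # rest \<in> lin_ext n r}"
    then show "t \<in> split_range" using split_word_in_range by blast
  next
    fix t assume t: "t \<in> split_range"
    obtain S a b where "t = (S, a, b)" by (cases t)
    with t obtain rest where "Suc k # rest \<in> lin_ext n r" "split_word (Suc k) rest = t"
      using split_word_surj by blast
    then show "t \<in> split_word (Suc k) ` {rest. Suc k # rest \<in> lin_ext n r}" by blast
  qed
qed (rule inj_on_split_word)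

lemma sum_wt_perm_Cons_root:
  "(\<Sum>rest\<in>{rest. Suc k # rest \<in> lin_ext n r}. wt_perm x (Suc k # rest))
   = (\<Sum>S\<in>{S. S \<subseteq> {2..n} \<and> card S = k}. wt_set x S) * (\<Sum>a\<in>lin_ext k lower. wt_perm x a)
     * (\<Sum>b\<in>lin_ext (n - Suc k) upper. wt_perm (\<lambda>i. x (i + Suc k)) b)"
proof -
  have "(\<Sum>rest\<in>{rest. Suc k # rest \<in> lin_ext n r}. wt_perm x (Suc k # rest))
      = (\<Sum>(S, a, b)\<in>split_range. wt_set x S * wt_perm x a * wt_perm (\<lambda>i. x (i + Suc k)) b)"
    unfolding wt_perm_Cons_split_word by (rule sum.reindex_bij_betw[OF bij_betw_split_word])
  also have "\<dots> = (\<Sum>S\<in>{S. S \<subseteq> {2..n} \<and> card S = k}. wt_set x S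
      * (\<Sum>a\<in>lin_ext k lower. \<Sum>b\<in>lin_ext (n - Suc k) upper. wt_perm x a * wt_perm (\<lambda>i. x (i + Suc k)) b))"
    by (simp add: sum.cartesian_product[symmetric] sum_distrib_left mult.assoc)
  also have "\<dots> = (\<Sum>S\<in>{S. S \<subseteq> {2..n} \<and> card S = k}. wt_set x S) * (\<Sum>a\<in>lin_ext k lower. wt_perm x a)
     * (\<Sum>b\<in>lin_ext (n - Suc k) upper. wt_perm (\<lambda>i. x (i + Suc k)) b)"
    by (simp only: sum_product[symmetric] sum_distrib_right mult.assoc)
  finally show ?thesis .
qed

lemma prod_hooks_split:
  "(\<Prod>i\<in>{1..n}. hook x r i)
   = (\<Prod>i\<in>{1..k}. hook x r i) * hook x r (Suc k) * (\<Prod>i\<in>{1..n - Suc k}. hook x r (i + Suc k))"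
proof -
  have "(\<Prod>i\<in>{1..n}. hook x r i)
      = (\<Prod>i\<in>{1..k}. hook x r i) * (hook x r (Suc k) * (\<Prod>i\<in>{Suc (Suc k)..n}. hook x r i))"
    unfolding atLeastAtMost_split_root by (simp add: prod.union_disjoint)
  also have "(\<Prod>i\<in>{Suc (Suc k)..n}. hook x r i) = (\<Prod>i\<in>{1..n - Suc k}. hook x r (i + Suc k))"
    unfolding upper_image by (simp add: prod.reindex inj_on_def)
  finally show ?thesis by (simp only: mult.assoc)
qed

lemma sum_wt_perm_Cons_root_eq:
  assumes generic: "\<And>j m. 0 < m \<Longrightarrow> brk x j m \<noteq> 0"
    and lower_formula: "(\<Sum>a\<in>lin_ext k lower. wt_perm x a) = qfact x k / (\<Prod>i\<in>{1..k}. hook x lower i)"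
    and upper_formula: "(\<Sum>b\<in>lin_ext (n - Suc k) upper. wt_perm (\<lambda>i. x (i + Suc k)) b)
        = qfact (\<lambda>i. x (i + Suc k)) (n - Suc k)
          / (\<Prod>i\<in>{1..n - Suc k}. hook (\<lambda>i. x (i + Suc k)) upper i)"
  shows "(\<Sum>rest\<in>{rest. Suc k # rest \<in> lin_ext n r}. wt_perm x (Suc k # rest))
       = qfact (\<lambda>i. x (i + 1)) (n - 1) * hook x r (Suc k) / (\<Prod>i\<in>{1..n}. hook x r i)"
proof -
  define A where "A = (\<Prod>i\<in>{1..k}. hook x r i)"
  define B where "B = (\<Prod>i\<in>{1..n - Suc k}. hook x r (i + Suc k))"
  define P where "P = (\<Prod>j<k. brk x (1 + j) (n - 1 - j))"
  have "(\<Prod>i\<in>{1..k}. hook x lower i) = A"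
    unfolding A_def by (rule prod.cong[OF refl]) (rule hook_lower)
  moreover have "(\<Prod>i\<in>{1..n - Suc k}. hook (\<lambda>i. x (i + Suc k)) upper i) = B"
    unfolding B_def by (rule prod.cong[OF refl]) (rule hook_upper)
  ultimately have "(\<Sum>rest\<in>{rest. Suc k # rest \<in> lin_ext n r}. wt_perm x (Suc k # rest))
      = P / qfact x k * (qfact x k / A) * (qfact (\<lambda>i. x (i + Suc k)) (n - Suc k) / B)"
    using k_less unfolding sum_wt_perm_Cons_root lower_formula upper_formula P_def
    by (simp add: sum_wt_set_card_subsets)
  also have "\<dots> = P * qfact (\<lambda>i. x (i + Suc k)) (n - Suc k) / (A * B)"
    using qfact_nonzero[OF generic] by (simp add: field_simps)
  also have "P * qfact (\<lambda>i. x (i + Suc k)) (n - Suc k) = qfact (\<lambda>i. x (i + 1)) (n - 1)"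
    unfolding P_def using qfact_shift_split[of k "n - 1" x] k_less by simp
  also have "qfact (\<lambda>i. x (i + 1)) (n - 1) / (A * B)
      = qfact (\<lambda>i. x (i + 1)) (n - 1) * hook x r (Suc k) / (\<Prod>i\<in>{1..n}. hook x r i)"
    using hook_nonzero[OF po generic, of "Suc k"] k_less
    unfolding prod_hooks_split A_def[symmetric] B_def[symmetric] by (simp add: field_simps)
  finally show ?thesis .
qed

end

lemma sum_wt_perm_lin_ext:
  fixes x :: "nat \<Rightarrow> 'a::field"
  assumes "\<And>j m. 0 < m \<Longrightarrow> brk x j m \<noteq> 0" "forest_poset n r" "recursively_labelled n r"
  shows "(\<Sum>w\<in>lin_ext n r. wt_perm x w) = qfact x n / (\<Prod>i\<in>{1..n}. hook x r i)"
  using assms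
proof (induction n arbitrary: x r rule: less_induct)
  case (less n)
  have po: "partial_order_on {1..n} r" using less.prems(2) unfolding forest_poset_def by blast
  show ?case
  proof (cases "n = 0")
    case True
    then have "lin_ext n r = {[]}" unfolding lin_ext_def by auto
    with True show ?thesis by (simp add: qfact_def)
  next
    case False
    define Q where "Q = qfact (\<lambda>i. x (i + 1)) (n - 1)"
    have "(\<Sum>w\<in>lin_ext n r. wt_perm x w)
        = (\<Sum>v\<in>{v. root n r v}. \<Sum>rest\<in>{rest. v # rest \<in> lin_ext n r}. wt_perm x (v # rest))"
      using False by (intro sum_lin_ext_first_letter[OF po]) simp
    also have "\<dots> = (\<Sum>v\<in>{v. root n r v}. Q * hook x r v / (\<Prod>i\<in>{1..n}. hook x r i))"
    proof (rule sum.cong[OF refl])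
      fix v assume "v \<in> {v. root n r v}"
      then obtain k where "v = Suc k" "root n r (Suc k)" unfolding root_def by (cases v) auto
      then interpret forest_with_root n r k using less.prems by unfold_locales
      have "k < n" "n - Suc k < n" using k_less by auto
      with less.IH less.prems(1) forest_poset_lower forest_poset_upper
        recursively_labelled_lower recursively_labelled_upper
      show "(\<Sum>rest\<in>{rest. v # rest \<in> lin_ext n r}. wt_perm x (v # rest))
          = Q * hook x r v / (\<Prod>i\<in>{1..n}. hook x r i)"
        unfolding Q_def \<open>v = Suc k\<close>
        by (intro sum_wt_perm_Cons_root_eq) (auto simp: brk_shift)
    qed
    also have "\<dots> = Q * (\<Sum>v\<in>{v. root n r v}. hook x r v) / (\<Prod>i\<in>{1..n}. hook x r i)"
      by (simp add: sum_divide_distrib sum_distrib_left)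
    also have "Q * (\<Sum>v\<in>{v. root n r v}. hook x r v) = qfact x n"
      unfolding Q_def sum_hook_roots[OF less.prems(2,3)]
      using qfact_Suc[of x "n - 1"] False by (simp add: mult.commute)
    finally show ?thesis .
  qed
qed

theorem theorem1p1:
  fixes x :: "nat \<Rightarrow> 'a::field_char_0" and n :: nat and r :: "(nat \<times> nat) set"
  assumes generic: "\<And>j m. 0 < m \<Longrightarrow> brk x j m \<noteq> 0"
    and forest: "forest_poset n r"
    and reclab: "recursively_labelled n r"
  shows "(\<Sum>w\<in>lin_ext n r. wt_perm x w)
         = qfact x n / (\<Prod>i\<in>{1..n}. brk x (Min (up_set r i) - 1) (card (up_set r i)))"
  using sum_wt_perm_lin_ext[OF generic forest reclab] unfolding hook_def .

end
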